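(* Let $\beta\colon[0,\infty)\to(0,1)$ be continuous with $\beta^*:=\sup_{t\ge0}\beta(t)<1$, and let $D$ be the multistable subordinator with index $\beta$ (defined in the context). Then the process $D$ is continuous in probability. Moreover, for every $\varepsilon>0$ there exists a constant $C_\varepsilon>0$ such that \[ \mathbb{P}\bigl(D(t+h)-D(t)>\varepsilon\bigr)\le C_\varepsilon h\qquad\text{for all } t,h\in[0,\infty). \]
   Context: Let $\beta\colon[0,\infty)\to(0,1)$ be a continuous function. Let $\Pi=\{(t_i,x_i)\}$ be a Poisson point process on $[0,\infty)\times(0,\infty)$ with intensity measure $\nu(dt,dx)=\beta(t)x^{-\beta(t)-1}\,dt\,dx$. The multistable subordinator with index $\beta$ is the process $D(t)=\sum_{(t_i,x_i)\in\Pi,\ t_i\le t}x_i$, $t\ge0$ (this sum is a.s. finite since $\int_0^t(1-\beta(s))^{-1}ds<\infty$). *)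

theory Defs
  imports "HOL-Probability.Probability"
begin

definition multistable_intensity :: "(real \<Rightarrow> real) \<Rightarrow> (real \<times> real) measure" where
  "multistable_intensity \<beta> =
     density lborel (\<lambda>(t, x). if 0 \<le> t \<and> 0 < x
                               then ennreal (\<beta> t * x powr (- \<beta> t - 1)) else 0)"

definition point_count :: "('w \<Rightarrow> 'p set) \<Rightarrow> 'p set \<Rightarrow> 'w \<Rightarrow> nat" where
  "point_count P A \<omega> = card (P \<omega> \<inter> A)"

definition poisson_point_process ::
    "'w measure \<Rightarrow> ('p::topological_space) measure \<Rightarrow> ('w \<Rightarrow> 'p set) \<Rightarrow> bool" where
  "poisson_point_process M \<nu> P \<longleftrightarrow>
     prob_space M \<and> sets \<nu> = sets borel \<and>
     (\<forall>\<omega>\<in>space M. countable (P \<omega>)) \<and>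
     (\<forall>A\<in>sets borel. emeasure \<nu> A < \<infinity> \<longrightarrow>
        point_count P A \<in> measurable M (count_space UNIV) \<and>
        {\<omega>\<in>space M. finite (P \<omega> \<inter> A)} \<in> sets M \<and>
        (AE \<omega> in M. finite (P \<omega> \<inter> A)) \<and>
        (\<forall>k::nat. measure M {\<omega>\<in>space M. finite (P \<omega> \<inter> A) \<and> point_count P A \<omega> = k}
                  = measure \<nu> A ^ k / fact k * exp (- measure \<nu> A))) \<and>
     (\<forall>(I::nat set) A. finite I \<longrightarrow> (\<forall>i\<in>I. A i \<in> sets borel \<and> emeasure \<nu> (A i) < \<infinity>) \<longrightarrow>
        disjoint_family_on A I \<longrightarrow>
        prob_space.indep_vars M (\<lambda>_. count_space UNIV) (\<lambda>i. point_count P (A i)) I)"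

text \<open>The multistable subordinator D(t) = sum of x_i over points (t_i,x_i) with t_i <= t.
  (The sum is a.s. finite; infsum is 0 on the null set where it is not summable.)\<close>
definition multistable_subordinator :: "('w \<Rightarrow> (real \<times> real) set) \<Rightarrow> real \<Rightarrow> 'w \<Rightarrow> real" where
  "multistable_subordinator P t \<omega> = (\<Sum>\<^sub>\<infinity>p\<in>{p\<in>P \<omega>. fst p \<le> t}. snd p)"

end

theory Submission
  imports Defs
begin

text \<open>Fix \<open>\<epsilon> > 0\<close> and an interval \<open>(a, b]\<close>, and sort the points \<open>(t_i, x_i)\<close> with
  \<open>t_i \<in> (a, b]\<close> into those with \<open>x_i > \<epsilon>\<close> and the dyadic shells \<open>\<epsilon>/2^(k+1) < x_i \<le> \<epsilon>/2^k\<close>.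
  If no point has \<open>x_i > \<epsilon>\<close> and the \<open>k\<close>-th shell holds at most \<open>(1 - r)(2r)^k\<close> points for some
  \<open>r < 1\<close>, then \<open>D(b) - D(a) \<le> \<Sum>_k (\<epsilon>/2^k)(1 - r)(2r)^k = \<epsilon>\<close>. The intensity of the \<open>k\<close>-th shell
  is at most \<open>(b - a)(1 + (\<epsilon>/2^(k+1))^(-\<beta>*))\<close>, so the Poisson tail bound
  \<open>P(N > j) \<le> E N / (j + 1)\<close> and a union bound give \<open>P(|D(b) - D(a)| > \<epsilon>) \<le> C (b - a)\<close>, where
  \<open>C\<close> is finite as soon as \<open>2^\<beta>* < 2r\<close>; such an \<open>r < 1\<close> exists because \<open>\<beta>* < 1\<close>. Continuity
  in probability follows from this Lipschitz bound.\<close>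

definition dyadic_shell :: "real \<Rightarrow> nat \<Rightarrow> real set" where
  "dyadic_shell \<epsilon> k = {\<epsilon> / 2 ^ Suc k<..\<epsilon> / 2 ^ k}"

lemma ex_dyadic_shell:
  fixes x \<epsilon> :: real
  assumes "0 < x" "x \<le> \<epsilon>"
  shows "\<exists>k. x \<in> dyadic_shell \<epsilon> k"
proof -
  obtain n where "\<epsilon> / x < 2 ^ n" using real_arch_pow[of 2 "\<epsilon> / x"] by auto
  then have "\<epsilon> / 2 ^ n < x" using assms by (simp add: field_simps)
  moreover have "\<not> \<epsilon> / 2 ^ 0 < x" using assms by simp
  ultimately obtain k where "\<not> \<epsilon> / 2 ^ k < x" "\<epsilon> / 2 ^ Suc k < x"
    using exists_least_lemma[where P = "\<lambda>n. \<epsilon> / 2 ^ n < x"] by blast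
  then show ?thesis by (auto simp: dyadic_shell_def)
qed

lemma sum_le_of_sparse_dyadic_shells:
  fixes f :: "'a \<Rightarrow> real"
  assumes F: "finite F" and r: "0 < r" "r < 1" and eps: "0 \<le> \<epsilon>"
    and range: "\<And>p. p \<in> F \<Longrightarrow> 0 < f p \<and> f p \<le> \<epsilon>"
    and sparse: "\<And>k. real (card {p\<in>F. f p \<in> dyadic_shell \<epsilon> k}) \<le> (1 - r) * (2 * r) ^ k"
  shows "sum f F \<le> \<epsilon>"
proof -
  define \<kappa> where "\<kappa> p = (SOME k. f p \<in> dyadic_shell \<epsilon> k)" for p
  have \<kappa>: "f p \<in> dyadic_shell \<epsilon> (\<kappa> p)" if "p \<in> F" for p
    unfolding \<kappa>_def by (rule someI_ex) (use range[OF that] ex_dyadic_shell in auto)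
  have "sum f F \<le> (\<Sum>p\<in>F. \<epsilon> / 2 ^ \<kappa> p)"
    using \<kappa> by (intro sum_mono) (auto simp: dyadic_shell_def)
  also have "\<dots> = (\<Sum>k\<in>\<kappa> ` F. \<Sum>p\<in>{p\<in>F. \<kappa> p = k}. \<epsilon> / 2 ^ \<kappa> p)"
    by (rule sum.image_gen[OF F])
  also have "\<dots> = (\<Sum>k\<in>\<kappa> ` F. real (card {p\<in>F. \<kappa> p = k}) * (\<epsilon> / 2 ^ k))"
    by (intro sum.cong) auto
  also have "\<dots> \<le> (\<Sum>k\<in>\<kappa> ` F. (1 - r) * (2 * r) ^ k * (\<epsilon> / 2 ^ k))"
  proof (intro sum_mono mult_right_mono)
    fix k
    have "card {p\<in>F. \<kappa> p = k} \<le> card {p\<in>F. f p \<in> dyadic_shell \<epsilon> k}"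
      using \<kappa> F by (intro card_mono) auto
    then show "real (card {p\<in>F. \<kappa> p = k}) \<le> (1 - r) * (2 * r) ^ k"
      using sparse[of k] by linarith
  qed (use eps in simp)
  also have "\<dots> = \<epsilon> * (1 - r) * (\<Sum>k\<in>\<kappa> ` F. r ^ k)"
    by (simp add: sum_distrib_left power_mult_distrib mult_ac)
  also have "\<dots> \<le> \<epsilon> * (1 - r) * (\<Sum>k. r ^ k)"
    using eps r F by (intro mult_left_mono sum_le_suminf) (auto intro: summable_geometric)
  also have "\<dots> = \<epsilon>"
    using r by (simp add: suminf_geometric)
  finally show ?thesis .
qed

lemma finite_subset_sum_gt_of_infsum_Un_diff:
  fixes f :: "'a \<Rightarrow> real"
  assumes XY: "X \<inter> Y = {}" and nonneg: "\<And>y. y \<in> Y \<Longrightarrow> 0 \<le> f y"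
    and gt: "c < \<bar>infsum f (X \<union> Y) - infsum f X\<bar>"
  shows "\<exists>F. finite F \<and> F \<subseteq> Y \<and> c < sum f F"
proof (cases "f summable_on Y")
  case False
  then have "\<not> bdd_above (sum f ` {F. F \<subseteq> Y \<and> finite F})"
    using nonneg_bdd_above_summable_on[of Y f] nonneg by blast
  then show ?thesis
    unfolding bdd_above_def by (auto simp: not_le)
next
  case Ysum: True
  show ?thesis
  proof (cases "f summable_on X")
    case False
    then have "\<not> f summable_on (X \<union> Y)"
      using summable_on_subset_banach[of f "X \<union> Y" X] by blast
    with False gt have "c < 0"
      by (simp add: infsum_not_exists)
    then show ?thesis by (intro exI[of _ "{}"]) simp
  next
    case Xsum: True
    have "infsum f (X \<union> Y) - infsum f X = infsum f Y"
      using infsum_Un_disjoint[OF Xsum Ysum XY] by simp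
    moreover have "0 \<le> infsum f Y" using nonneg by (rule infsum_nonneg)
    ultimately have "c < infsum f Y" using gt by simp
    moreover have "(sum f \<longlongrightarrow> infsum f Y) (finite_subsets_at_top Y)"
      using has_sum_infsum[OF Ysum] unfolding has_sum_def .
    ultimately have "eventually (\<lambda>F. c < sum f F) (finite_subsets_at_top Y)"
      by (rule order_tendstoD(1)[rotated])
    then show ?thesis
      unfolding eventually_finite_subsets_at_top by blast
  qed
qed

lemma infsum_increment_le_of_sparse_shells:
  fixes Q :: "(real \<times> real) set"
  assumes ab: "a \<le> b" and eps: "0 \<le> \<epsilon>" and r: "0 < r" "r < 1"
    and pos: "\<And>p. p \<in> Q \<Longrightarrow> 0 < snd p"
    and no_big: "Q \<inter> {a<..b} \<times> {\<epsilon><..} = {}"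
    and finite_shell: "\<And>k. finite (Q \<inter> {a<..b} \<times> dyadic_shell \<epsilon> k)"
    and sparse: "\<And>k. real (card (Q \<inter> {a<..b} \<times> dyadic_shell \<epsilon> k)) \<le> (1 - r) * (2 * r) ^ k"
  shows "\<bar>(\<Sum>\<^sub>\<infinity>p\<in>{p\<in>Q. fst p \<le> b}. snd p) - (\<Sum>\<^sub>\<infinity>p\<in>{p\<in>Q. fst p \<le> a}. snd p)\<bar> \<le> \<epsilon>"
proof (rule ccontr)
  define X where "X = {p\<in>Q. fst p \<le> a}"
  define Y where "Y = {p\<in>Q. a < fst p \<and> fst p \<le> b}"
  have "{p\<in>Q. fst p \<le> b} = X \<union> Y" "X \<inter> Y = {}"
    using ab by (auto simp: X_def Y_def)
  moreover assume "\<not> ?thesis"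
  ultimately obtain F where F: "finite F" "F \<subseteq> Y" "\<epsilon> < sum snd F"
    using finite_subset_sum_gt_of_infsum_Un_diff[of X Y snd \<epsilon>] pos
    by (auto simp: X_def Y_def less_imp_le)
  have "sum snd F \<le> \<epsilon>"
  proof (rule sum_le_of_sparse_dyadic_shells[OF F(1) r eps])
    fix p assume "p \<in> F"
    with F(2) no_big pos show "0 < snd p \<and> snd p \<le> \<epsilon>"
      by (cases p) (fastforce simp: Y_def)
  next
    fix k
    have "{p\<in>F. snd p \<in> dyadic_shell \<epsilon> k} \<subseteq> Q \<inter> {a<..b} \<times> dyadic_shell \<epsilon> k"
      using F(2) by (auto simp: Y_def mem_Times_iff)
    then have "card {p\<in>F. snd p \<in> dyadic_shell \<epsilon> k} \<le> card (Q \<inter> {a<..b} \<times> dyadic_shell \<epsilon> k)"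
      using finite_shell by (rule card_mono[rotated])
    then show "real (card {p\<in>F. snd p \<in> dyadic_shell \<epsilon> k}) \<le> (1 - r) * (2 * r) ^ k"
      using sparse[of k] by linarith
  qed
  with F(3) show False by simp
qed

definition multistable_density :: "(real \<Rightarrow> real) \<Rightarrow> real \<times> real \<Rightarrow> ennreal" where
  "multistable_density \<beta> = (\<lambda>(t, x). if 0 \<le> t \<and> 0 < x then ennreal (\<beta> t * x powr (- \<beta> t - 1)) else 0)"

lemma multistable_density_borel_measurable:
  assumes "continuous_on {0..} \<beta>"
  shows "multistable_density \<beta> \<in> borel_measurable borel"
proof -
  define g where "g t = (if t \<in> {0::real..} then \<beta> t else 0)" for t
  have [measurable]: "g \<in> borel_measurable borel"
    unfolding g_def by (rule borel_measurable_continuous_on_if) (auto intro: assms)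
  have "multistable_density \<beta> =
        (\<lambda>(t, x). if 0 \<le> t \<and> 0 < x then ennreal (g t * x powr (- g t - 1)) else 0)"
    by (auto simp: multistable_density_def g_def fun_eq_iff)
  also have "\<dots> \<in> borel_measurable (borel \<Otimes>\<^sub>M borel)"
    by measurable
  finally show ?thesis
    by (simp only: borel_prod)
qed

lemma emeasure_multistable_intensity:
  assumes "continuous_on {0..} \<beta>" and "A \<in> sets borel"
  shows "emeasure (multistable_intensity \<beta>) A =
           (\<integral>\<^sup>+t. \<integral>\<^sup>+x. multistable_density \<beta> (t, x) * indicator A (t, x) \<partial>lborel \<partial>lborel)"
proof -
  note meas = multistable_density_borel_measurable[OF assms(1)]
  have "emeasure (multistable_intensity \<beta>) A = (\<integral>\<^sup>+p. multistable_density \<beta> p * indicator A p \<partial>lborel)"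
    unfolding multistable_intensity_def multistable_density_def[symmetric]
    using meas assms(2) by (intro emeasure_density) auto
  also have "\<dots> = (\<integral>\<^sup>+p. multistable_density \<beta> p * indicator A p \<partial>(lborel \<Otimes>\<^sub>M lborel))"
    by (simp add: lborel_prod)
  also have "\<dots> = (\<integral>\<^sup>+t. \<integral>\<^sup>+x. multistable_density \<beta> (t, x) * indicator A (t, x) \<partial>lborel \<partial>lborel)"
    using meas assms(2) by (intro lborel.nn_integral_fst[symmetric]) (simp add: lborel_prod)
  finally show ?thesis .
qed

lemma nn_integral_pareto_tail:
  fixes b a :: real
  assumes "0 < b" "0 < a"
  shows "(\<integral>\<^sup>+x. ennreal (b * x powr (- b - 1)) * indicator {a..} x \<partial>lborel) = ennreal (a powr (- b))"
proof -
  have "(\<integral>\<^sup>+x. ennreal (b * x powr (- b - 1)) * indicator {a..} x \<partial>lborel) = ennreal (0 - (- (a powr (- b))))"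
  proof (rule nn_integral_FTC_atLeast)
    fix x assume "a \<le> x"
    with assms have "0 < x" by simp
    then show "DERIV (\<lambda>x. - (x powr (- b))) x :> b * x powr (- b - 1)"
      by (auto intro!: derivative_eq_intros simp: algebra_simps)
    show "0 \<le> b * x powr (- b - 1)" using assms by simp
  next
    have "((\<lambda>x. x powr (- b)) \<longlongrightarrow> 0) at_top"
      using assms by (intro tendsto_neg_powr filterlim_ident) auto
    then show "((\<lambda>x. - (x powr (- b))) \<longlongrightarrow> 0) at_top"
      using tendsto_minus by fastforce
  qed measurable
  then show ?thesis by simp
qed

lemma powr_minus_le_one_plus_powr_minus:
  fixes y b B :: real
  assumes "0 < y" "0 \<le> b" "b \<le> B"
  shows "y powr (- b) \<le> 1 + y powr (- B)"
proof (cases "y \<le> 1")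
  case True
  then have "y powr (- b) \<le> y powr (- B)"
    using assms by (intro powr_mono') auto
  then show ?thesis by simp
next
  case False
  then have "y powr (- b) \<le> y powr 0"
    using assms by (intro powr_mono) auto
  then show ?thesis
    using \<open>0 < y\<close> by (simp add: add_increasing2)
qed

lemma emeasure_multistable_intensity_strip_le:
  assumes cont: "continuous_on {0..} \<beta>"
    and pos: "\<And>t. 0 \<le> t \<Longrightarrow> 0 < \<beta> t" and le: "\<And>t. 0 \<le> t \<Longrightarrow> \<beta> t \<le> B"
    and "0 < y" "s \<le> u" and A: "A \<in> sets borel" "A \<subseteq> {s<..u} \<times> {y<..}"
  shows "emeasure (multistable_intensity \<beta>) A \<le> ennreal ((u - s) * (1 + y powr (- B)))"
proof -
  let ?S = "{s<..u} \<times> {y<..}"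
  have inner: "(\<integral>\<^sup>+x. multistable_density \<beta> (t, x) * indicator ?S (t, x) \<partial>lborel)
                 \<le> ennreal (1 + y powr (- B)) * indicator {s<..u} t" for t
  proof (cases "t \<in> {s<..u} \<and> 0 \<le> t")
    case False
    then have "(\<integral>\<^sup>+x. multistable_density \<beta> (t, x) * indicator ?S (t, x) \<partial>lborel)
                 = (\<integral>\<^sup>+x. 0 \<partial>(lborel :: real measure))"
      by (intro nn_integral_cong) (auto simp: multistable_density_def indicator_def)
    then show ?thesis by simp
  next
    case True
    have "(\<integral>\<^sup>+x. multistable_density \<beta> (t, x) * indicator ?S (t, x) \<partial>lborel)
          \<le> (\<integral>\<^sup>+x. ennreal (\<beta> t * x powr (- \<beta> t - 1)) * indicator {y..} x \<partial>lborel)"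
      using True \<open>0 < y\<close> by (intro nn_integral_mono) (auto simp: multistable_density_def indicator_def)
    also have "\<dots> = ennreal (y powr (- \<beta> t))"
      using True pos \<open>0 < y\<close> by (intro nn_integral_pareto_tail) auto
    also have "\<dots> \<le> ennreal (1 + y powr (- B))"
      using True pos[of t] le[of t] \<open>0 < y\<close> by (intro ennreal_leI powr_minus_le_one_plus_powr_minus) auto
    finally show ?thesis using True by simp
  qed
  have "emeasure (multistable_intensity \<beta>) A \<le> emeasure (multistable_intensity \<beta>) ?S"
    using A by (intro emeasure_mono) (auto simp: multistable_intensity_def intro: borel_Times)
  also have "\<dots> \<le> (\<integral>\<^sup>+t. ennreal (1 + y powr (- B)) * indicator {s<..u} t \<partial>lborel)"
    using inner by (simp add: emeasure_multistable_intensity[OF cont] borel_Times nn_integral_mono)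
  also have "\<dots> = ennreal (1 + y powr (- B)) * ennreal (u - s)"
    using \<open>s \<le> u\<close> by (simp add: nn_integral_cmult_indicator)
  also have "\<dots> = ennreal ((u - s) * (1 + y powr (- B)))"
    using \<open>s \<le> u\<close> by (simp add: ennreal_mult' mult.commute)
  finally show ?thesis .
qed

lemma emeasure_multistable_intensity_outside_quadrant:
  assumes "continuous_on {0..} \<beta>"
  shows "emeasure (multistable_intensity \<beta>) ({..<0} \<times> UNIV \<union> UNIV \<times> {..0}) = 0"
proof -
  have zero: "multistable_density \<beta> (t, x) * indicator ({..<0} \<times> UNIV \<union> UNIV \<times> {..0}) (t, x) = 0"
    for t x :: real
    by (auto simp: multistable_density_def indicator_def)
  have "{..<0::real} \<times> (UNIV :: real set) \<union> UNIV \<times> {..0} \<in> sets borel"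
    by (intro sets.Un borel_Times) auto
  then show ?thesis
    using assms by (simp only: emeasure_multistable_intensity zero) simp
qed

lemma poisson_upper_tail_le:
  fixes l :: real
  assumes l: "0 \<le> l"
  shows "1 - (\<Sum>k<Suc j. l ^ k / fact k * exp (- l)) \<le> l / real (Suc j)"
proof -
  define a where "a n = l ^ n / fact n" for n
  have a_nonneg: "0 \<le> a n" for n using l by (simp add: a_def)
  have "a = (\<lambda>n. l ^ n /\<^sub>R fact n)"
    by (simp add: a_def fun_eq_iff field_simps)
  then have exp_sums: "a sums exp l"
    using exp_converges[of l] by simp
  have "a (n + Suc j) \<le> l / real (Suc j) * a (n + j)" for n
  proof -
    have "a (n + Suc j) = l / real (Suc (n + j)) * a (n + j)"
      by (simp add: a_def field_simps)
    also have "\<dots> \<le> l / real (Suc j) * a (n + j)"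
      using l a_nonneg[of "n + j"] by (intro mult_right_mono divide_left_mono) auto
    finally show ?thesis .
  qed
  then have "exp l - (\<Sum>k<Suc j. a k) \<le> l / real (Suc j) * (exp l - (\<Sum>k<j. a k))"
    by (rule sums_le[OF _ sums_split_initial_segment[OF exp_sums]
                         sums_mult[OF sums_split_initial_segment[OF exp_sums]]])
  also have "\<dots> \<le> l / real (Suc j) * exp l"
    using l a_nonneg by (intro mult_left_mono) (auto intro: sum_nonneg)
  finally have "exp (- l) * (exp l - (\<Sum>k<Suc j. a k)) \<le> exp (- l) * (l / real (Suc j) * exp l)"
    by (intro mult_left_mono) auto
  then show ?thesis
    by (simp add: a_def sum_distrib_left sum_distrib_right right_diff_distrib exp_minus field_simps)
qed

definition many_points_event :: "'w measure \<Rightarrow> ('w \<Rightarrow> 'p set) \<Rightarrow> 'p set \<Rightarrow> nat \<Rightarrow> 'w set" where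
  "many_points_event M P A j = {\<omega>\<in>space M. infinite (P \<omega> \<inter> A) \<or> j < point_count P A \<omega>}"

lemma poisson_point_process_many_points:
  assumes pp: "poisson_point_process M \<nu> P"
    and A: "A \<in> sets borel" "emeasure \<nu> A \<le> ennreal x" and "0 \<le> x"
  shows "many_points_event M P A j \<in> sets M"
    and "measure M (many_points_event M P A j) \<le> x / real (Suc j)"
proof -
  interpret prob_space M using pp by (simp add: poisson_point_process_def)
  have "emeasure \<nu> A < \<infinity>"
    using A(2) by (simp add: le_less_trans)
  with pp A(1) have count_meas: "point_count P A \<in> measurable M (count_space UNIV)"
    and finite_meas: "{\<omega>\<in>space M. finite (P \<omega> \<inter> A)} \<in> sets M"
    and poisson: "\<And>k. measure M {\<omega>\<in>space M. finite (P \<omega> \<inter> A) \<and> point_count P A \<omega> = k}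
                         = measure \<nu> A ^ k / fact k * exp (- measure \<nu> A)"
    unfolding poisson_point_process_def by blast+
  define N where "N k = {\<omega>\<in>space M. finite (P \<omega> \<inter> A) \<and> point_count P A \<omega> = k}" for k
  have N_meas: "N k \<in> sets M" for k
  proof -
    have "{\<omega>\<in>space M. point_count P A \<omega> = k} \<in> sets M"
      using measurable_sets[OF count_meas, of "{k}"] by (simp add: vimage_def Int_def conj_commute)
    from sets.Int[OF finite_meas this] show ?thesis
      unfolding N_def by (simp add: Int_def) (metis (no_types, lifting) Collect_cong)
  qed
  have E_eq: "many_points_event M P A j = space M - (\<Union>k<Suc j. N k)"
    by (auto simp: many_points_event_def N_def)
  then show "many_points_event M P A j \<in> sets M"
    using N_meas by auto
  have "measure M (many_points_event M P A j) = 1 - measure M (\<Union>k<Suc j. N k)"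
    unfolding E_eq using N_meas by (intro prob_compl) auto
  also have "measure M (\<Union>k<Suc j. N k) = (\<Sum>k<Suc j. measure M (N k))"
    using N_meas by (intro finite_measure_finite_Union) (auto simp: disjoint_family_on_def N_def)
  finally have "measure M (many_points_event M P A j) \<le> measure \<nu> A / real (Suc j)"
    using poisson_upper_tail_le[of "measure \<nu> A" j] by (simp add: N_def poisson)
  also have "\<dots> \<le> x / real (Suc j)"
    using A(2) \<open>0 \<le> x\<close> by (intro divide_right_mono) (auto simp: measure_def enn2real_leI)
  finally show "measure M (many_points_event M P A j) \<le> x / real (Suc j)" .
qed

lemma (in finite_measure) finite_measure_UN_le_suminf:
  assumes "\<And>k. A k \<in> sets M" "\<And>k. measure M (A k) \<le> f k" "summable f"
  shows "measure M (\<Union>k. A k) \<le> suminf f"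
proof -
  have "summable (\<lambda>k. measure M (A k))"
    using assms by (intro summable_comparison_test'[OF \<open>summable f\<close>, of 0]) auto
  then have "measure M (\<Union>k. A k) \<le> (\<Sum>k. measure M (A k))"
    using assms(1) by (intro finite_measure_subadditive_countably) auto
  also have "\<dots> \<le> suminf f"
    using assms \<open>summable (\<lambda>k. measure M (A k))\<close> by (intro suminf_le) auto
  finally show ?thesis .
qed

lemma summable_dyadic_shell_weights:
  fixes B \<epsilon> q :: real
  assumes "0 \<le> B" "2 powr B < q" "0 < \<epsilon>"
  shows "summable (\<lambda>k. (1 + (\<epsilon> / 2 ^ Suc k) powr (- B)) / q ^ k)"
proof -
  define z where "z = 2 powr B"
  have "1 \<le> z" using assms(1) by (simp add: z_def ge_one_powr_ge_zero)
  with assms have "1 < q" "z < q" by (auto simp: z_def)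
  have "(\<epsilon> / 2 ^ Suc k) powr (- B) = \<epsilon> powr (- B) * z ^ Suc k" for k
    using assms(3) by (simp add: z_def powr_divide powr_minus_divide powr_realpow[symmetric] powr_powr powr_mult
                                  powr_power mult.commute)
  then have "(1 + (\<epsilon> / 2 ^ Suc k) powr (- B)) / q ^ k = (1 / q) ^ k + \<epsilon> powr (- B) * z * (z / q) ^ k"
    for k using \<open>1 < q\<close> by (simp add: add_divide_distrib power_divide)
  moreover have "summable (\<lambda>k. (1 / q) ^ k + \<epsilon> powr (- B) * z * (z / q) ^ k)"
    using \<open>1 < q\<close> \<open>1 \<le> z\<close> \<open>z < q\<close>
    by (intro summable_add summable_mult summable_geometric) auto
  ultimately show ?thesis by simp
qed

lemma real_Suc_nat_floor_ge:
  fixes x :: real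
  assumes "0 \<le> x"
  shows "x \<le> real (Suc (nat \<lfloor>x\<rfloor>))"
proof -
  have "real (Suc (nat \<lfloor>x\<rfloor>)) = real_of_int \<lfloor>x\<rfloor> + 1"
    using assms by simp
  then show ?thesis
    using real_of_int_floor_add_one_ge[of x] by linarith
qed

lemma not_in_many_points_event_iff:
  assumes "\<omega> \<in> space M"
  shows "\<omega> \<notin> many_points_event M P A j \<longleftrightarrow> finite (P \<omega> \<inter> A) \<and> card (P \<omega> \<inter> A) \<le> j"
  using assms by (auto simp: many_points_event_def point_count_def)

lemma multistable_increment_gt_subset:
  fixes a b \<epsilon> r :: real and P :: "'w \<Rightarrow> (real \<times> real) set"
  assumes "a \<le> b" "0 < \<epsilon>" "0 < r" "r < 1"
  shows "{\<omega>\<in>space M. \<epsilon> < \<bar>multistable_subordinator P b \<omega> - multistable_subordinator P a \<omega>\<bar>}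
           \<subseteq> many_points_event M P ({..<0} \<times> UNIV \<union> UNIV \<times> {..0}) 0
             \<union> many_points_event M P ({a<..b} \<times> {\<epsilon><..}) 0
             \<union> (\<Union>k. many_points_event M P ({a<..b} \<times> dyadic_shell \<epsilon> k) (nat \<lfloor>(1 - r) * (2 * r) ^ k\<rfloor>))"
    (is "_ \<subseteq> ?N0 \<union> ?Big \<union> (\<Union>k. ?Sh k)")
proof (rule subsetI, rule ccontr)
  fix \<omega> assume \<omega>: "\<omega> \<in> {\<omega>\<in>space M. \<epsilon> < \<bar>multistable_subordinator P b \<omega> - multistable_subordinator P a \<omega>\<bar>}"
    and "\<omega> \<notin> ?N0 \<union> ?Big \<union> (\<Union>k. ?Sh k)"
  then have "\<omega> \<in> space M" "\<omega> \<notin> ?N0" "\<omega> \<notin> ?Big" "\<And>k. \<omega> \<notin> ?Sh k"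
    by auto
  then have N0: "finite (P \<omega> \<inter> ({..<0} \<times> UNIV \<union> UNIV \<times> {..0}))
                   \<and> card (P \<omega> \<inter> ({..<0} \<times> UNIV \<union> UNIV \<times> {..0})) \<le> 0"
    and Big: "finite (P \<omega> \<inter> {a<..b} \<times> {\<epsilon><..}) \<and> card (P \<omega> \<inter> {a<..b} \<times> {\<epsilon><..}) \<le> 0"
    and Sh: "finite (P \<omega> \<inter> {a<..b} \<times> dyadic_shell \<epsilon> k)
               \<and> card (P \<omega> \<inter> {a<..b} \<times> dyadic_shell \<epsilon> k) \<le> nat \<lfloor>(1 - r) * (2 * r) ^ k\<rfloor>" for k
    unfolding not_in_many_points_event_iff[OF \<open>\<omega> \<in> space M\<close>, symmetric] by blast+
  have "\<bar>multistable_subordinator P b \<omega> - multistable_subordinator P a \<omega>\<bar> \<le> \<epsilon>"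
    unfolding multistable_subordinator_def
  proof (rule infsum_increment_le_of_sparse_shells[OF assms(1) less_imp_le[OF assms(2)] assms(3,4)])
    have "P \<omega> \<inter> ({..<0} \<times> UNIV \<union> UNIV \<times> {..0}) = {}"
      by (rule card_0_eq[THEN iffD1]) (use N0 in simp_all)
    then show "0 < snd p" if "p \<in> P \<omega>" for p
      using that by (cases p) (auto simp: not_less)
    show "P \<omega> \<inter> {a<..b} \<times> {\<epsilon><..} = {}"
      by (rule card_0_eq[THEN iffD1]) (use Big in simp_all)
    show "finite (P \<omega> \<inter> {a<..b} \<times> dyadic_shell \<epsilon> k)" for k
      using Sh[of k] by (rule conjunct1)
    show "real (card (P \<omega> \<inter> {a<..b} \<times> dyadic_shell \<epsilon> k)) \<le> (1 - r) * (2 * r) ^ k" for k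
    proof -
      have "real (card (P \<omega> \<inter> {a<..b} \<times> dyadic_shell \<epsilon> k)) \<le> real (nat \<lfloor>(1 - r) * (2 * r) ^ k\<rfloor>)"
        using Sh[of k] by (simp only: of_nat_le_iff)
      also have "\<dots> \<le> (1 - r) * (2 * r) ^ k"
        using assms(3,4) by (intro of_nat_floor) simp
      finally show ?thesis .
    qed
  qed
  with \<omega> show False by simp
qed

text \<open>The bound is stated for all subsets \<open>S\<close> of the event because the measurability of the
  increments of the subordinator is never established.\<close>

lemma measure_multistable_increment_gt_le:
  fixes \<beta> :: "real \<Rightarrow> real" and M :: "'w measure" and P :: "'w \<Rightarrow> (real \<times> real) set"
  assumes cont: "continuous_on {0..} \<beta>"
    and pos: "\<And>t. 0 \<le> t \<Longrightarrow> 0 < \<beta> t" and le: "\<And>t. 0 \<le> t \<Longrightarrow> \<beta> t \<le> B"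
    and pp: "poisson_point_process M (multistable_intensity \<beta>) P"
    and eps: "0 < \<epsilon>" and "a \<le> b" and r: "0 < r" "r < 1"
    and S: "S \<subseteq> {\<omega>\<in>space M. \<epsilon> < \<bar>multistable_subordinator P b \<omega> - multistable_subordinator P a \<omega>\<bar>}"
  defines "c \<equiv> \<lambda>k. (1 + (\<epsilon> / 2 ^ Suc k) powr (- B)) / ((1 - r) * (2 * r) ^ k)"
  assumes c_summable: "summable c"
  shows "measure M S \<le> (b - a) * (1 + \<epsilon> powr (- B) + suminf c)"
proof -
  interpret prob_space M
    using pp by (simp add: poisson_point_process_def)
  define N0 where "N0 = many_points_event M P ({..<0} \<times> UNIV \<union> UNIV \<times> {..0}) 0"
  define Big where "Big = many_points_event M P ({a<..b} \<times> {\<epsilon><..}) 0"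
  define m where "m k = nat \<lfloor>(1 - r) * (2 * r) ^ k\<rfloor>" for k
  define Sh where "Sh k = many_points_event M P ({a<..b} \<times> dyadic_shell \<epsilon> k) (m k)" for k
  note many_points = poisson_point_process_many_points[OF pp]
  have N0_borel: "{..<0::real} \<times> (UNIV :: real set) \<union> UNIV \<times> {..0} \<in> sets borel"
    by (intro sets.Un borel_Times) auto
  have "emeasure (multistable_intensity \<beta>) ({..<0} \<times> UNIV \<union> UNIV \<times> {..0}) \<le> ennreal 0"
    by (simp add: emeasure_multistable_intensity_outside_quadrant[OF cont])
  from many_points[OF N0_borel this order_refl, of 0]
  have N0: "N0 \<in> sets M" "measure M N0 \<le> 0"
    by (simp_all add: N0_def)
  have "emeasure (multistable_intensity \<beta>) ({a<..b} \<times> {\<epsilon><..}) \<le> ennreal ((b - a) * (1 + \<epsilon> powr (- B)))"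
    using eps \<open>a \<le> b\<close> by (intro emeasure_multistable_intensity_strip_le[OF cont pos le]) (auto intro: borel_Times)
  from many_points[OF _ this, of 0] \<open>a \<le> b\<close>
  have Big: "Big \<in> sets M" "measure M Big \<le> (b - a) * (1 + \<epsilon> powr (- B))"
    by (simp_all add: Big_def borel_Times)
  have Sh: "Sh k \<in> sets M" "measure M (Sh k) \<le> (b - a) * c k" for k
  proof -
    define w where "w = (b - a) * (1 + (\<epsilon> / 2 ^ Suc k) powr (- B))"
    have "0 \<le> w" using \<open>a \<le> b\<close> by (simp add: w_def)
    have "emeasure (multistable_intensity \<beta>) ({a<..b} \<times> dyadic_shell \<epsilon> k) \<le> ennreal w"
      unfolding w_def using eps \<open>a \<le> b\<close>
      by (intro emeasure_multistable_intensity_strip_le[OF cont pos le])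
         (auto simp: dyadic_shell_def intro: borel_Times)
    from many_points[OF _ this \<open>0 \<le> w\<close>, of "m k"]
    have "Sh k \<in> sets M" "measure M (Sh k) \<le> w / real (Suc (m k))"
      by (simp_all add: Sh_def dyadic_shell_def borel_Times)
    moreover have "(1 - r) * (2 * r) ^ k \<le> real (Suc (m k))"
      unfolding m_def using r by (intro real_Suc_nat_floor_ge) simp
    then have "w / real (Suc (m k)) \<le> w / ((1 - r) * (2 * r) ^ k)"
      using r \<open>0 \<le> w\<close> by (intro divide_left_mono) auto
    ultimately show "Sh k \<in> sets M" "measure M (Sh k) \<le> (b - a) * c k"
      by (auto simp: c_def w_def)
  qed
  have "measure M (\<Union>k. Sh k) \<le> (b - a) * suminf c"
    using Sh c_summable by (subst suminf_mult[symmetric]) (auto intro: finite_measure_UN_le_suminf)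
  moreover have "measure M S \<le> measure M (N0 \<union> Big \<union> (\<Union>k. Sh k))"
    using multistable_increment_gt_subset[OF \<open>a \<le> b\<close> eps r, of M P] S N0(1) Big(1) Sh(1)
    unfolding N0_def Big_def Sh_def m_def by (intro finite_measure_mono) auto
  moreover have "measure M (N0 \<union> Big \<union> (\<Union>k. Sh k)) \<le> measure M N0 + measure M Big + measure M (\<Union>k. Sh k)"
    using N0(1) Big(1) Sh(1) by (intro order_trans[OF measure_Un_le] add_right_mono measure_Un_le) auto
  ultimately show ?thesis
    using N0(2) Big(2) by (simp add: algebra_simps)
qed

lemma multistable_increment_tail_lipschitz:
  fixes \<beta> :: "real \<Rightarrow> real" and M :: "'w measure" and P :: "'w \<Rightarrow> (real \<times> real) set"
  assumes cont: "continuous_on {0..} \<beta>"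
    and pos: "\<And>t. 0 \<le> t \<Longrightarrow> 0 < \<beta> t" and le: "\<And>t. 0 \<le> t \<Longrightarrow> \<beta> t \<le> B" and "B < 1"
    and pp: "poisson_point_process M (multistable_intensity \<beta>) P" and eps: "0 < \<epsilon>"
  shows "\<exists>C>0. \<forall>s t S. S \<subseteq> {\<omega>\<in>space M.
            \<epsilon> < \<bar>multistable_subordinator P s \<omega> - multistable_subordinator P t \<omega>\<bar>} \<longrightarrow>
            measure M S \<le> C * \<bar>s - t\<bar>"
proof -
  \<comment> \<open>any \<open>r\<close> with \<open>2 powr B < 2 * r < 2\<close> would do\<close>
  define r where "r = (2 powr B + 2) / 4"
  define c where "c k = (1 + (\<epsilon> / 2 ^ Suc k) powr (- B)) / ((1 - r) * (2 * r) ^ k)" for k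
  have "0 \<le> B" using pos[of 0] le[of 0] by simp
  then have "1 \<le> 2 powr B" by (simp add: ge_one_powr_ge_zero)
  moreover have "2 powr B < (2::real)"
    using powr_less_mono[of B 1 2] \<open>B < 1\<close> by simp
  ultimately have r: "0 < r" "r < 1" "2 powr B < 2 * r"
    by (auto simp: r_def)
  have "summable (\<lambda>k. 1 / (1 - r) * ((1 + (\<epsilon> / 2 ^ Suc k) powr (- B)) / (2 * r) ^ k))"
    using \<open>0 \<le> B\<close> r(3) eps by (intro summable_mult summable_dyadic_shell_weights)
  then have c_summable: "summable c"
    by (simp add: c_def[abs_def])
  have bound: "measure M S \<le> (1 + \<epsilon> powr (- B) + suminf c) * \<bar>b - a\<bar>"
    if "a \<le> b" "S \<subseteq> {\<omega>\<in>space M. \<epsilon> < \<bar>multistable_subordinator P b \<omega> - multistable_subordinator P a \<omega>\<bar>}"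
    for a b S
    using measure_multistable_increment_gt_le[OF cont pos le pp eps that(1) r(1,2) that(2)
            c_summable[unfolded c_def[abs_def]], folded c_def[abs_def]] that(1)
    by (simp add: mult.commute)
  show ?thesis
  proof (intro exI[of _ "1 + \<epsilon> powr (- B) + suminf c"] conjI allI impI)
    have "0 \<le> c k" for k
      using r(1,2) unfolding c_def by simp
    then have "0 \<le> suminf c"
      by (rule suminf_nonneg[OF c_summable])
    then show "0 < 1 + \<epsilon> powr (- B) + suminf c"
      by (simp add: add_pos_nonneg)
  next
    fix s t S
    assume "S \<subseteq> {\<omega>\<in>space M. \<epsilon> < \<bar>multistable_subordinator P s \<omega> - multistable_subordinator P t \<omega>\<bar>}"
    then show "measure M S \<le> (1 + \<epsilon> powr (- B) + suminf c) * \<bar>s - t\<bar>"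
      using bound[of t s S] bound[of s t S] by (cases "t \<le> s") (auto simp: abs_minus_commute)
  qed
qed

theorem mainTheorem1:
  fixes \<beta> :: "real \<Rightarrow> real" and M :: "'w measure" and P :: "'w \<Rightarrow> (real \<times> real) set"
  assumes "continuous_on {0..} \<beta>"
    and "\<forall>t\<ge>0. 0 < \<beta> t \<and> \<beta> t < 1"
    and "(SUP t\<in>{0..}. \<beta> t) < 1"
    and "poisson_point_process M (multistable_intensity \<beta>) P"
  defines "D \<equiv> multistable_subordinator P"
  shows "(\<forall>t\<ge>0. \<forall>\<epsilon>>0.
            ((\<lambda>s. measure M {\<omega>\<in>space M. \<bar>D s \<omega> - D t \<omega>\<bar> > \<epsilon>}) \<longlongrightarrow> 0)
              (at t within {0..}))
       \<and> (\<forall>\<epsilon>>0. \<exists>C>0. \<forall>t\<ge>0. \<forall>h\<ge>0.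
            measure M {\<omega>\<in>space M. D (t + h) \<omega> - D t \<omega> > \<epsilon>} \<le> C * h)"
proof -
  have "bdd_above (\<beta> ` {0..})"
    using assms(2) by (intro bdd_aboveI[of _ 1]) (auto intro: less_imp_le)
  then have pos: "0 < \<beta> t" and le_sup: "\<beta> t \<le> (SUP t\<in>{0..}. \<beta> t)" if "0 \<le> t" for t
    using assms(2) that by (auto intro: cSUP_upper)
  have lipschitz: "\<exists>C>0. \<forall>s t S. S \<subseteq> {\<omega>\<in>space M. \<epsilon> < \<bar>D s \<omega> - D t \<omega>\<bar>} \<longrightarrow> measure M S \<le> C * \<bar>s - t\<bar>"
    if "0 < \<epsilon>" for \<epsilon>
    unfolding D_def by (rule multistable_increment_tail_lipschitz[OF assms(1) pos le_sup assms(3,4) that])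
  show ?thesis
  proof (intro conjI allI impI)
    fix t \<epsilon> :: real assume "0 < \<epsilon>"
    with lipschitz obtain C
      where C: "\<And>s t S. S \<subseteq> {\<omega>\<in>space M. \<epsilon> < \<bar>D s \<omega> - D t \<omega>\<bar>} \<Longrightarrow> measure M S \<le> C * \<bar>s - t\<bar>"
      by blast
    show "((\<lambda>s. measure M {\<omega>\<in>space M. \<bar>D s \<omega> - D t \<omega>\<bar> > \<epsilon>}) \<longlongrightarrow> 0) (at t within {0..})"
    proof (rule tendsto_sandwich[where f = "\<lambda>_. 0" and h = "\<lambda>s. C * \<bar>s - t\<bar>"])
      show "((\<lambda>s. C * \<bar>s - t\<bar>) \<longlongrightarrow> 0) (at t within {0..})"
        by (intro tendsto_eq_intros) auto
    qed (use C[OF order_refl] in simp_all)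
  next
    fix \<epsilon> :: real assume "0 < \<epsilon>"
    with lipschitz obtain C where "C > 0"
      and C: "\<And>s t S. S \<subseteq> {\<omega>\<in>space M. \<epsilon> < \<bar>D s \<omega> - D t \<omega>\<bar>} \<Longrightarrow> measure M S \<le> C * \<bar>s - t\<bar>"
      by blast
    have "measure M {\<omega>\<in>space M. D (t + h) \<omega> - D t \<omega> > \<epsilon>} \<le> C * h" if "0 \<le> h" for t h
    proof -
      have "{\<omega>\<in>space M. D (t + h) \<omega> - D t \<omega> > \<epsilon>} \<subseteq> {\<omega>\<in>space M. \<epsilon> < \<bar>D (t + h) \<omega> - D t \<omega>\<bar>}"
        by auto
      from C[OF this] that show ?thesis by simp
    qed
    with \<open>C > 0\<close> show "\<exists>C>0. \<forall>t\<ge>0. \<forall>h\<ge>0. measure M {\<omega>\<in>space M. D (t + h) \<omega> - D t \<omega> > \<epsilon>} \<le> C * h"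
      by blast
  qed
qed

end
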